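(* Let $r\in\mathbb{N}$ and suppose $S_N$ admits the Edgeworth expansion of order $r$, i.e. there are polynomials $P_1,\dots,P_r$ with $\mathbb{P}\big(\frac{S_N-NA}{\sqrt N}\leq z\big)-\mathfrak{N}(z)=\sum_{p=1}^rN^{-p/2}P_p(z)\mathfrak{n}(z)+o(N^{-r/2})$ uniformly in $z\in\mathbb{R}$. Then for all $c\in(0,r)$, $$\mathbb{P}\big(S_N\geq AN+\sqrt{c\sigma^2N\ln N}\big)\sim\frac{1}{\sqrt{2\pi c}}\,\frac{1}{\sqrt{N^c\ln N}}\quad\text{as }N\to\infty.$$
   Context: $X_1,X_2,\dots$ are real random variables, $S_N=\sum_{n=1}^N X_n$, $A\in\mathbb{R}$, $\sigma^2>0$, $\mathfrak{n}(y)=\frac{1}{\sqrt{2\pi\sigma^2}}e^{-y^2/(2\sigma^2)}$, $\mathfrak{N}(z)=\int_{-\infty}^z\mathfrak{n}(y)\,dy$. $a_N\sim b_N$ means $a_N/b_N\to1$. *)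

theory Defs
  imports "HOL-Probability.Probability" "HOL-Computational_Algebra.Polynomial"
    "HOL-Library.Landau_Symbols"
begin

definition nfrak :: "real \<Rightarrow> real \<Rightarrow> real" where
  "nfrak \<sigma> y = normal_density 0 \<sigma> y"

definition Nfrak :: "real \<Rightarrow> real \<Rightarrow> real" where
  "Nfrak \<sigma> z = (LBINT y:{..z}. nfrak \<sigma> y)"

definition partial_sum :: "(nat \<Rightarrow> 'a \<Rightarrow> real) \<Rightarrow> nat \<Rightarrow> 'a \<Rightarrow> real" where
  "partial_sum X N x = (\<Sum>n=1..N. X n x)"



end

theory Submission
  imports Defs "HOL-Real_Asymp.Real_Asymp"
begin

(* With z_N = sqrt (c sigma^2 ln N) the event in question is {T_N >= z_N} for the normalised sum
   T_N = (S_N - N A) / sqrt N. The Edgeworth expansion gives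
   P(T_N >= z_N) = 1 - N(z_N) - sum_p N^(-p/2) P_p(z_N) n(z_N) + o(N^(-r/2)).
   By the Mills ratio 1 - N(z) ~ sigma^2 n(z) / z, which at z = z_N is exactly
   (2 pi c)^(-1/2) (N^c ln N)^(-1/2). The correction terms are smaller by a factor N^(-p/2) times a
   polynomial in sqrt (ln N), and the error o(N^(-r/2)) is negligible precisely because c < r. *)

lemma DERIV_normal_density_0:
  "s > 0 \<Longrightarrow> DERIV (normal_density 0 s) t :> - t / s\<^sup>2 * normal_density 0 s t"
  unfolding normal_density_def
  by (auto intro!: derivative_eq_intros simp: field_simps power2_eq_square)

lemma isCont_nfrak: "s > 0 \<Longrightarrow> isCont (nfrak s) t"
  unfolding nfrak_def by (rule DERIV_isCont[OF DERIV_normal_density_0])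

lemma nfrak_pos: "s > 0 \<Longrightarrow> nfrak s t > 0"
  unfolding nfrak_def by (rule normal_density_pos)

lemma nfrak_le: "s > 0 \<Longrightarrow> nfrak s t \<le> 1 / sqrt (2 * pi * s\<^sup>2)"
  unfolding nfrak_def normal_density_def by (simp add: divide_right_mono)

lemma set_integrable_nfrak:
  "A \<in> sets borel \<Longrightarrow> s > 0 \<Longrightarrow> set_integrable lborel A (nfrak s)"
  unfolding set_integrable_def nfrak_def
  by (rule integrable_mult_indicator[OF _ integrable_normal_density]) auto

lemma set_integral_nfrak_split:
  assumes "s > 0" "A \<in> sets borel" "B \<in> sets borel" "A \<inter> B = {}"
  shows "(LBINT x:A \<union> B. nfrak s x) = (LBINT x:A. nfrak s x) + (LBINT x:B. nfrak s x)"
  using assms by (intro set_integral_Un set_integrable_nfrak) auto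

lemma Nfrak_diff:
  assumes "s > 0" "y \<le> z"
  shows "Nfrak s z - Nfrak s y = (LBINT x:{y<..z}. nfrak s x)"
proof -
  have "{..y} \<union> {y<..z} = {..z}" "{..y} \<inter> {y<..z} = {}" using assms(2) by auto
  then show ?thesis
    unfolding Nfrak_def using set_integral_nfrak_split[OF assms(1), of "{..y}" "{y<..z}"] by simp
qed

lemma one_minus_Nfrak:
  assumes "s > 0"
  shows "1 - Nfrak s z = (LBINT x:{z<..}. nfrak s x)"
proof -
  have "(LBINT x:UNIV. nfrak s x) = 1"
    using assms by (simp add: nfrak_def set_lebesgue_integral_def)
  moreover have "{..z} \<union> {z<..} = UNIV" "{..z} \<inter> {z<..} = {}" by auto
  ultimately show ?thesis
    unfolding Nfrak_def using set_integral_nfrak_split[OF assms, of "{..z}" "{z<..}"] by simp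
qed

lemma set_integral_Ioi_FTC_nonneg:
  fixes F f :: "real \<Rightarrow> real"
  assumes deriv: "\<And>t. t \<ge> z \<Longrightarrow> DERIV F t :> f t"
    and cont: "\<And>t. t > z \<Longrightarrow> isCont f t"
    and nonneg: "\<And>t. t > z \<Longrightarrow> 0 \<le> f t"
    and lim: "(F \<longlongrightarrow> 0) at_top"
  shows "set_integrable lborel {z<..} f" "(LBINT t:{z<..}. f t) = - F z"
proof -
  have Ioi: "einterval (ereal z) \<infinity> = {z<..}"
    by (auto simp: einterval_def)
  have "isCont F z" using deriv[of z] DERIV_isCont by simp
  then have at_z: "((F \<circ> real_of_ereal) \<longlongrightarrow> F z) (at_right (ereal z))"
    unfolding ereal_tendsto_simps isCont_def by (rule filterlim_mono) (simp_all add: at_le)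
  have at_infinity: "((F \<circ> real_of_ereal) \<longlongrightarrow> 0) (at_left \<infinity>)"
    unfolding ereal_tendsto_simps by (fact lim)
  have "set_integrable lborel (einterval (ereal z) \<infinity>) f"
    "(LBINT t=ereal z..\<infinity>. f t) = 0 - F z"
    by (rule interval_integral_FTC_nonneg[OF _ _ _ _ at_z at_infinity];
        use deriv cont nonneg in auto)+
  then show "set_integrable lborel {z<..} f" "(LBINT t:{z<..}. f t) = - F z"
    by (simp_all add: Ioi interval_lebesgue_integral_def)
qed

lemma gaussian_tail_le:
  assumes "s > 0" "z > 0"
  shows "1 - Nfrak s z \<le> s\<^sup>2 * nfrak s z / z"
proof -
  define f where "f t = t / z * nfrak s t" for t
  have deriv: "DERIV (\<lambda>t. - s\<^sup>2 / z * nfrak s t) t :> f t" for t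
    using DERIV_normal_density_0[OF assms(1), of t] assms
    by (auto intro!: derivative_eq_intros simp: f_def nfrak_def field_simps power2_eq_square)
  have lim: "((\<lambda>t. - s\<^sup>2 / z * nfrak s t) \<longlongrightarrow> 0) at_top"
    unfolding nfrak_def normal_density_def using assms by real_asymp
  have "isCont f t" for t
    unfolding f_def using assms by (intro continuous_intros isCont_nfrak) auto
  moreover have "0 \<le> f t" if "t > z" for t
    unfolding f_def using that assms nfrak_pos[of s t] by simp
  ultimately have FTC: "set_integrable lborel {z<..} f" "(LBINT t:{z<..}. f t) = s\<^sup>2 * nfrak s z / z"
    using set_integral_Ioi_FTC_nonneg[of z _ f, OF deriv _ _ lim] by simp_all
  have "nfrak s t \<le> f t" if "t > z" for t
    using mult_right_mono[of 1 "t / z" "nfrak s t"] that assms nfrak_pos[of s t]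
    by (simp add: f_def)
  then have "(LBINT t:{z<..}. nfrak s t) \<le> (LBINT t:{z<..}. f t)"
    using FTC(1) assms(1) by (intro set_integral_mono set_integrable_nfrak) auto
  then show ?thesis
    using FTC(2) one_minus_Nfrak[OF assms(1)] by simp
qed

lemma gaussian_tail_ge:
  assumes "s > 0" "z \<ge> 2 * s"
  shows "s\<^sup>2 * nfrak s z / z * (1 - s\<^sup>2 / z\<^sup>2) \<le> 1 - Nfrak s z"
proof -
  have "z > 0" using assms by simp
  \<comment> \<open>\<open>- F z\<close> is the two-term asymptotic expansion of the tail; \<open>F' = f\<close> lies below the
     density and is nonnegative beyond \<open>2 * s\<close>.\<close>
  define F where "F t = - nfrak s t * (s\<^sup>2 / t - s ^ 4 / t ^ 3)" for t
  define f where "f t = nfrak s t * (1 - 3 * s ^ 4 / t ^ 4)" for t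
  have deriv: "DERIV F t :> f t" if "t \<ge> z" for t
  proof -
    have "t \<noteq> 0" using that \<open>z > 0\<close> by auto
    then show ?thesis
      using DERIV_normal_density_0[OF assms(1), of t] assms(1) unfolding F_def f_def nfrak_def
      by (auto intro!: derivative_eq_intros
               simp: field_simps power2_eq_square power3_eq_cube power4_eq_xxxx eval_nat_numeral)
  qed
  have lim: "(F \<longlongrightarrow> 0) at_top"
    unfolding F_def nfrak_def normal_density_def using assms by real_asymp
  have small: "3 * s ^ 4 / t ^ 4 \<le> 1" if "t > z" for t
  proof -
    have "(2 * s) ^ 4 \<le> t ^ 4" using that assms by (intro power_mono) auto
    moreover have "(2 * s) ^ 4 = 16 * s ^ 4" "0 < s ^ 4" using assms(1) by simp_all
    ultimately have "3 * s ^ 4 \<le> t ^ 4" by linarith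
    then show ?thesis using that \<open>z > 0\<close> by simp
  qed
  have "isCont f t" if "t > z" for t
    unfolding f_def using that \<open>z > 0\<close> assms by (intro continuous_intros isCont_nfrak) auto
  moreover have "0 \<le> f t" if "t > z" for t
    unfolding f_def using small[OF that] nfrak_pos[OF assms(1), of t] by simp
  ultimately have FTC: "set_integrable lborel {z<..} f" "(LBINT t:{z<..}. f t) = - F z"
    using set_integral_Ioi_FTC_nonneg[of z F f, OF deriv _ _ lim] by simp_all
  have "f t \<le> nfrak s t" for t
    using nfrak_pos[OF assms(1), of t] by (simp add: f_def mult_left_le)
  then have "(LBINT t:{z<..}. f t) \<le> (LBINT t:{z<..}. nfrak s t)"
    using FTC(1) assms(1) by (intro set_integral_mono set_integrable_nfrak) auto
  moreover have "- F z = s\<^sup>2 * nfrak s z / z * (1 - s\<^sup>2 / z\<^sup>2)"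
    using \<open>z > 0\<close> by (simp add: F_def field_simps power2_eq_square power3_eq_cube eval_nat_numeral)
  ultimately show ?thesis
    using FTC(2) one_minus_Nfrak[OF assms(1)] by simp
qed

lemma gaussian_tail_asymp_equiv:
  assumes "s > 0"
  shows "(\<lambda>z. 1 - Nfrak s z) \<sim>[at_top] (\<lambda>z. s\<^sup>2 * nfrak s z / z)"
proof (rule asymp_equiv_sandwich_real)
  have factor: "(\<lambda>z. 1 - s\<^sup>2 / z\<^sup>2) \<sim>[at_top] (\<lambda>_. 1::real)"
    by real_asymp
  show "(\<lambda>z. s\<^sup>2 * nfrak s z / z * (1 - s\<^sup>2 / z\<^sup>2)) \<sim>[at_top] (\<lambda>z. s\<^sup>2 * nfrak s z / z)"
    using asymp_equiv_mult[OF asymp_equiv_refl[of "\<lambda>z. s\<^sup>2 * nfrak s z / z"] factor] by simp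
  show "eventually (\<lambda>z. 1 - Nfrak s z
          \<in> {s\<^sup>2 * nfrak s z / z * (1 - s\<^sup>2 / z\<^sup>2)..s\<^sup>2 * nfrak s z / z}) at_top"
    using eventually_ge_at_top[of "2 * s"]
    by eventually_elim (use assms gaussian_tail_le gaussian_tail_ge in auto)
qed simp

lemma Nfrak_lipschitz:
  assumes "s > 0"
  shows "(1 / sqrt (2 * pi * s\<^sup>2))-lipschitz_on UNIV (Nfrak s)"
proof -
  let ?L = "1 / sqrt (2 * pi * s\<^sup>2)"
  have increment: "0 \<le> Nfrak s z - Nfrak s y \<and> Nfrak s z - Nfrak s y \<le> ?L * (z - y)"
    if "y \<le> z" for y z
  proof -
    have "set_integrable lborel {y<..z} (\<lambda>_. ?L)"
      unfolding set_integrable_def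
      by (intro integrable_scaleR_left integrable_real_indicator) (use that in auto)
    then have "(LBINT x:{y<..z}. nfrak s x) \<le> (LBINT x:{y<..z}. ?L)"
      using assms by (intro set_integral_mono set_integrable_nfrak nfrak_le) auto
    moreover have "0 \<le> (LBINT x:{y<..z}. nfrak s x)"
      unfolding set_lebesgue_integral_def using nfrak_pos[OF assms]
      by (intro Bochner_Integration.integral_nonneg) (simp add: less_imp_le)
    ultimately show ?thesis
      using Nfrak_diff[OF assms that] that by (simp add: set_integral_const)
  qed
  show ?thesis
  proof (rule lipschitz_onI)
    show "dist (Nfrak s y) (Nfrak s z) \<le> ?L * dist y z" for y z
      using increment[of y z] increment[of z y] by (cases "y \<le> z") (auto simp: dist_real_def)
  qed simp
qed

lemma isCont_Nfrak: "s > 0 \<Longrightarrow> isCont (Nfrak s) z"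
  using lipschitz_on_continuous_on[OF Nfrak_lipschitz] by (simp add: continuous_on_eq_continuous_at)

lemma poly_bigo_power_degree:
  fixes q :: "real poly"
  shows "poly q \<in> O(\<lambda>x. x ^ degree q)"
proof (rule bigoI_tendsto)
  show "((\<lambda>x. poly q x / x ^ degree q) \<longlongrightarrow> lead_coeff q) at_top"
    by (rule tendsto_mono[OF at_top_le_at_infinity poly_divide_tendsto_aux])
  show "eventually (\<lambda>x. x ^ degree q \<noteq> (0::real)) at_top"
    using eventually_gt_at_top[of 0] by eventually_elim simp
qed

lemma prob_ge_approx:
  fixes T :: "'a \<Rightarrow> real" and H :: "real \<Rightarrow> real"
  assumes M: "prob_space M" and T: "T \<in> borel_measurable M" and H: "isCont H w"
    and approx: "\<And>v. \<bar>measure M {x\<in>space M. T x \<le> v} - H v\<bar> \<le> E"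
  shows "\<bar>measure M {x\<in>space M. T x \<ge> w} - (1 - H w)\<bar> \<le> E"
proof -
  interpret prob_space M by (rule M)
  have le_event: "{x\<in>space M. T x \<le> v} \<in> events" for v
    using T by (simp add: borel_measurable_iff_le)
  have less_event: "{x\<in>space M. T x < w} \<in> events"
    using T by (simp add: borel_measurable_iff_less)
  have "measure M {x\<in>space M. T x < w} \<le> measure M {x\<in>space M. T x \<le> w}"
    using le_event by (intro finite_measure_mono) auto
  \<comment> \<open>\<open>T < w\<close> contains every \<open>T \<le> v\<close> with \<open>v < w\<close>; continuity of \<open>H\<close> lets \<open>v \<rightarrow> w\<close>.\<close>
  moreover have "H w - E \<le> measure M {x\<in>space M. T x < w}"
  proof (rule tendsto_le[of "at_left w"])
    show "((\<lambda>v. H v - E) \<longlongrightarrow> H w - E) (at_left w)"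
      using H by (intro tendsto_intros) (simp add: isCont_def filterlim_mono at_le)
    have "\<forall>\<^sub>F v in at_left w. v < w"
      by (simp add: eventually_at_filter)
    then show "\<forall>\<^sub>F v in at_left w. H v - E \<le> measure M {x\<in>space M. T x < w}"
    proof eventually_elim
      case (elim v)
      have "measure M {x\<in>space M. T x \<le> v} \<le> measure M {x\<in>space M. T x < w}"
        using elim less_event by (intro finite_measure_mono) auto
      then show ?case using approx[of v] by linarith
    qed
  qed simp_all
  moreover have "{x\<in>space M. T x \<ge> w} = space M - {x\<in>space M. T x < w}"
    by auto
  ultimately show ?thesis
    using approx[of w] prob_compl[OF less_event] by auto
qed

definition edgeworth_sum :: "real \<Rightarrow> (nat \<Rightarrow> real poly) \<Rightarrow> nat \<Rightarrow> nat \<Rightarrow> real \<Rightarrow> real" where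
  "edgeworth_sum \<sigma> P r N z = (\<Sum>p=1..r. real N powr (- real p / 2) * poly (P p) z * nfrak \<sigma> z)"

lemma isCont_edgeworth_sum: "\<sigma> > 0 \<Longrightarrow> isCont (edgeworth_sum \<sigma> P r N) z"
  unfolding edgeworth_sum_def by (intro continuous_intros isCont_nfrak) simp

lemma edgeworth_upper_tail:
  assumes "prob_space M" "\<And>N. T N \<in> borel_measurable M" "\<sigma> > 0"
    and edgeworth: "\<forall>e>0. \<forall>\<^sub>F N in sequentially. \<forall>z.
           \<bar>measure M {x \<in> space M. T N x \<le> z} - Nfrak \<sigma> z - edgeworth_sum \<sigma> P r N z\<bar>
           \<le> e * real N powr (- real r / 2)"
  shows "(\<lambda>N. measure M {x \<in> space M. T N x \<ge> w N}
           - (1 - Nfrak \<sigma> (w N) - edgeworth_sum \<sigma> P r N (w N)))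
         \<in> o(\<lambda>N. real N powr (- real r / 2))"
proof (rule landau_o.smallI)
  fix e :: real
  assume "e > 0"
  with edgeworth have "\<forall>\<^sub>F N in sequentially. \<forall>z.
           \<bar>measure M {x \<in> space M. T N x \<le> z} - Nfrak \<sigma> z - edgeworth_sum \<sigma> P r N z\<bar>
           \<le> e * real N powr (- real r / 2)"
    by blast
  then show "\<forall>\<^sub>F N in at_top. norm (measure M {x \<in> space M. T N x \<ge> w N}
           - (1 - Nfrak \<sigma> (w N) - edgeworth_sum \<sigma> P r N (w N)))
         \<le> e * norm (real N powr (- real r / 2))"
  proof eventually_elim
    case (elim N)
    have "isCont (\<lambda>z. Nfrak \<sigma> z + edgeworth_sum \<sigma> P r N z) (w N)"
      using assms(3) by (intro continuous_intros isCont_Nfrak isCont_edgeworth_sum)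
    from prob_ge_approx[OF assms(1,2) this] elim show ?case
      by (simp add: diff_diff_eq)
  qed
qed

lemma edgeworth_sum_smallo:
  assumes "a > 0" "\<sigma> > 0"
  defines "z \<equiv> \<lambda>N::nat. sqrt (a * ln (real N))"
  shows "(\<lambda>N. edgeworth_sum \<sigma> P r N (z N)) \<in> o(\<lambda>N. \<sigma>\<^sup>2 * nfrak \<sigma> (z N) / z N)"
  unfolding edgeworth_sum_def
proof (rule big_sum_in_smallo)
  fix p assume "p \<in> {1..r}"
  have z: "filterlim z at_top at_top"
    unfolding z_def using assms(1) by real_asymp
  have "(\<lambda>N. real N powr (- real p / 2) * poly (P p) (z N))
          \<in> O(\<lambda>N. real N powr (- real p / 2) * z N ^ degree (P p))"
    by (intro landau_o.big.mult_left landau_o.big.compose[OF poly_bigo_power_degree z])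
  also have "(\<lambda>N. real N powr (- real p / 2) * z N ^ degree (P p)) \<in> o(\<lambda>N. \<sigma>\<^sup>2 / z N)"
    unfolding z_def using assms(1,2) \<open>p \<in> {1..r}\<close> by real_asymp
  finally have "(\<lambda>N. real N powr (- real p / 2) * poly (P p) (z N) * nfrak \<sigma> (z N))
                  \<in> o(\<lambda>N. \<sigma>\<^sup>2 / z N * nfrak \<sigma> (z N))"
    by (rule landau_o.small.mult_right)
  then show "(\<lambda>N. real N powr (- real p / 2) * poly (P p) (z N) * nfrak \<sigma> (z N))
               \<in> o(\<lambda>N. \<sigma>\<^sup>2 * nfrak \<sigma> (z N) / z N)"
    by (simp add: field_simps)
qed

lemma mills_term_sqrt_ln:
  assumes "x > 1" "c > 0" "s > 0"
  shows "s\<^sup>2 * nfrak s (sqrt (c * s\<^sup>2 * ln x)) / sqrt (c * s\<^sup>2 * ln x)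
       = 1 / sqrt (2 * pi * c) * (1 / sqrt (x powr c * ln x))"
proof -
  have "ln x > 0" using assms by simp
  have "(sqrt (c * s\<^sup>2 * ln x) - 0)\<^sup>2 / (2 * s\<^sup>2) = c / 2 * ln x"
    using assms \<open>ln x > 0\<close> by simp
  then have exp_eq: "exp (- (sqrt (c * s\<^sup>2 * ln x) - 0)\<^sup>2 / (2 * s\<^sup>2)) = inverse (x powr (c / 2))"
    using assms by (simp add: powr_def exp_minus)
  have sqrt_eqs: "sqrt (x powr c * ln x) = x powr (c / 2) * sqrt (ln x)"
    "sqrt (2 * pi * s\<^sup>2) = sqrt (2 * pi) * s" "sqrt (2 * pi * c) = sqrt (2 * pi) * sqrt c"
    using assms by (simp_all add: real_sqrt_mult powr_half_sqrt[symmetric] powr_powr)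
  have "sqrt (c * s\<^sup>2 * ln x) = s * sqrt c * sqrt (ln x)"
    using assms by (simp add: real_sqrt_mult)
  moreover have "x powr (c / 2) > 0" using assms by simp
  ultimately show ?thesis
    unfolding nfrak_def normal_density_def exp_eq sqrt_eqs
    using assms \<open>ln x > 0\<close> by (simp add: field_simps power2_eq_square)
qed

lemma powr_smallo_mills_term:
  assumes "\<sigma> > 0" "0 < c" "c < real r"
  shows "(\<lambda>N::nat. real N powr (- real r / 2))
           \<in> o(\<lambda>N. \<sigma>\<^sup>2 * nfrak \<sigma> (sqrt (c * \<sigma>\<^sup>2 * ln (real N))) / sqrt (c * \<sigma>\<^sup>2 * ln (real N)))"
proof -
  have "(\<lambda>N::nat. real N powr (- real r / 2))
          \<in> o(\<lambda>N. 1 / sqrt (2 * pi * c) * (1 / sqrt (real N powr c * ln (real N))))"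
    using assms by real_asymp
  also have "\<forall>\<^sub>F N in at_top. 1 / sqrt (2 * pi * c) * (1 / sqrt (real N powr c * ln (real N)))
      = \<sigma>\<^sup>2 * nfrak \<sigma> (sqrt (c * \<sigma>\<^sup>2 * ln (real N))) / sqrt (c * \<sigma>\<^sup>2 * ln (real N))"
    using eventually_ge_at_top[of 2] by eventually_elim (use assms in \<open>simp add: mills_term_sqrt_ln\<close>)
  then have "(\<lambda>N. 1 / sqrt (2 * pi * c) * (1 / sqrt (real N powr c * ln (real N))))
      \<in> O(\<lambda>N. \<sigma>\<^sup>2 * nfrak \<sigma> (sqrt (c * \<sigma>\<^sup>2 * ln (real N))) / sqrt (c * \<sigma>\<^sup>2 * ln (real N)))"
    by (intro asymp_equiv_imp_bigo asymp_equiv_refl_ev)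
  finally show ?thesis .
qed

lemma edgeworth_tail_asymp_equiv:
  assumes "prob_space M" "\<And>N. T N \<in> borel_measurable M" "\<sigma> > 0" "0 < c" "c < real r"
    and edgeworth: "\<forall>e>0. \<forall>\<^sub>F N in sequentially. \<forall>z.
           \<bar>measure M {x \<in> space M. T N x \<le> z} - Nfrak \<sigma> z - edgeworth_sum \<sigma> P r N z\<bar>
           \<le> e * real N powr (- real r / 2)"
  defines "z \<equiv> \<lambda>N::nat. sqrt (c * \<sigma>\<^sup>2 * ln (real N))"
  shows "(\<lambda>N. measure M {x \<in> space M. T N x \<ge> z N}) \<sim>[at_top] (\<lambda>N. \<sigma>\<^sup>2 * nfrak \<sigma> (z N) / z N)"
    (is "?Q \<sim>[at_top] ?G")
proof -
  have "(\<lambda>N. ?Q N - (1 - Nfrak \<sigma> (z N) - edgeworth_sum \<sigma> P r N (z N)))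
          \<in> o(\<lambda>N. real N powr (- real r / 2))"
    using edgeworth_upper_tail[OF assms(1,2,3) edgeworth] .
  also have "(\<lambda>N. real N powr (- real r / 2)) \<in> o(?G)"
    unfolding z_def using powr_smallo_mills_term[OF assms(3,4,5)] .
  finally have error: "(\<lambda>N. ?Q N - (1 - Nfrak \<sigma> (z N) - edgeworth_sum \<sigma> P r N (z N))) \<in> o(?G)" .
  have "(\<lambda>N. edgeworth_sum \<sigma> P r N (z N)) \<in> o(?G)"
    unfolding z_def using assms(3,4) by (intro edgeworth_sum_smallo) simp_all
  from sum_in_smallo(2)[OF error this] have rest: "(\<lambda>N. ?Q N - (1 - Nfrak \<sigma> (z N))) \<in> o(?G)"
    by (simp add: algebra_simps)
  have "(\<lambda>N. 1 - Nfrak \<sigma> (z N)) \<sim>[at_top] ?G"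
    by (rule asymp_equiv_compose'[OF gaussian_tail_asymp_equiv[OF assms(3)]])
       (use assms(3,4) in \<open>unfold z_def, real_asymp\<close>)
  then show ?thesis
    using asymp_equiv_add_right[OF rest, of "\<lambda>N. 1 - Nfrak \<sigma> (z N)"] by simp
qed

theorem corollary5p3:
  fixes M :: "'a measure" and X :: "nat \<Rightarrow> 'a \<Rightarrow> real"
    and A \<sigma> c :: real and r :: nat and P :: "nat \<Rightarrow> real poly"
  assumes "prob_space M"
    and "\<And>n. X n \<in> borel_measurable M"
    and "\<sigma> > 0"
    and edgeworth: "\<forall>e>0. \<forall>\<^sub>F N in sequentially. \<forall>z::real.
           \<bar>measure M {x \<in> space M. (partial_sum X N x - real N * A) / sqrt (real N) \<le> z}
            - Nfrak \<sigma> z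
            - (\<Sum>p=1..r. real N powr (- real p / 2) * poly (P p) z * nfrak \<sigma> z)\<bar>
           \<le> e * real N powr (- real r / 2)"
    and "0 < c" and "c < real r"
  shows "(\<lambda>N::nat. measure M {x \<in> space M.
            partial_sum X N x \<ge> A * real N + sqrt (c * \<sigma>^2 * real N * ln (real N))})
         \<sim>[at_top] (\<lambda>N. 1 / sqrt (2 * pi * c) * (1 / sqrt (real N powr c * ln (real N))))"
proof -
  define T where "T N x = (partial_sum X N x - real N * A) / sqrt (real N)" for N x
  define z where "z N = sqrt (c * \<sigma>\<^sup>2 * ln (real N))" for N :: nat
  have "(\<lambda>N. measure M {x \<in> space M. T N x \<ge> z N}) \<sim>[at_top] (\<lambda>N. \<sigma>\<^sup>2 * nfrak \<sigma> (z N) / z N)"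
    unfolding z_def
  proof (rule edgeworth_tail_asymp_equiv)
    show "T N \<in> borel_measurable M" for N
      unfolding T_def partial_sum_def using assms(2) by measurable
  qed (use assms in \<open>simp_all add: T_def edgeworth_sum_def\<close>)
  moreover have "\<forall>\<^sub>F N in at_top. measure M {x \<in> space M. T N x \<ge> z N} = measure M {x \<in> space M.
            partial_sum X N x \<ge> A * real N + sqrt (c * \<sigma>^2 * real N * ln (real N))}"
    using eventually_gt_at_top[of 0]
  proof eventually_elim
    case (elim N)
    have "sqrt (c * \<sigma>^2 * real N * ln (real N)) = sqrt (real N) * z N"
      unfolding z_def by (simp add: real_sqrt_mult[symmetric] algebra_simps)
    then show ?case
      using elim by (simp add: T_def pos_le_divide_eq algebra_simps)
  qed
  moreover have "\<forall>\<^sub>F N in at_top. \<sigma>\<^sup>2 * nfrak \<sigma> (z N) / z N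
      = 1 / sqrt (2 * pi * c) * (1 / sqrt (real N powr c * ln (real N)))"
    using eventually_ge_at_top[of 2]
    by eventually_elim (use assms in \<open>simp add: z_def mills_term_sqrt_ln\<close>)
  ultimately show ?thesis
    by (rule asymp_equiv_transfer)
qed

end
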